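(* Let $K\in\mathbb{R}^{n\times n}$ be symmetric positive semidefinite, labels $y\in\{0,1\}^n$, sample weights $v\in\mathbb{R}^n$, $\lambda\ge0$, and consider kernel binary logistic regression in variables $\alpha\in\mathbb{R}^n$, $b\in\mathbb{R}$: $$\min F(\alpha,b)=-\sum_{i=1}^n v_i\big(y_i\log\hat y_i+(1-y_i)\log(1-\hat y_i)\big)+\lambda\alpha^\top K\alpha,\qquad \hat y=\sigma(K\alpha+b\mathbf{1}_n),$$ with $\sigma(t)=1/(1+e^{-t})$ entrywise. Let $\mathcal{Q}$ be a partition of $\{1,\dots,n\}$ such that (1) $(\mathcal{Q},\mathcal{Q})$ is equitable on $K$; (2) for each $T\in\mathcal{Q}$, $\sum_{i=1}^n v_iK_{ij}y_i$ is the same for all $j\in T$; (3) $v_i$ is constant on each $T\in\mathcal{Q}$. Then for every $b$ and every $\hat\alpha$ constant on each color of $\mathcal{Q}$, $\frac{\partial F}{\partial\alpha_{j_1}}(\hat\alpha,b)=\frac{\partial F}{\partial\alpha_{j_2}}(\hat\alpha,b)$ for all $j_1,j_2$ in the same color; hence $\mathcal{Q}$ together with the singleton $\{b\}$ is a reduction coloring for this problem.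
   Context: A partition of a finite set is a set of nonempty pairwise disjoint subsets ("colors") covering it. A pair $(\mathcal{P},\mathcal{Q})$ of partitions of the row and column indices of $A$ is equitable on $A$ if for every $S\in\mathcal{P}$, $T\in\mathcal{Q}$: $\sum_{j\in T}A_{ij}$ is the same for all $i\in S$ and $\sum_{i\in S}A_{ij}$ is the same for all $j\in T$. A reduction coloring of an unconstrained differentiable convex program $\min F(x)$ is a partition of the variables such that at every point constant on each color, the partial derivatives of $F$ with respect to variables in a common color coincide. *)

theory Defs
  imports "HOL-Analysis.Analysis" "HOL-Library.Disjoint_Sets"
begin

definition equitable :: "'r set set \<Rightarrow> 'c set set \<Rightarrow> ('r \<Rightarrow> 'c \<Rightarrow> real) \<Rightarrow> bool" where
  "equitable P Q A \<longleftrightarrow>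
     (\<forall>S\<in>P. \<forall>T\<in>Q.
        (\<forall>i1\<in>S. \<forall>i2\<in>S. (\<Sum>j\<in>T. A i1 j) = (\<Sum>j\<in>T. A i2 j)) \<and>
        (\<forall>j1\<in>T. \<forall>j2\<in>T. (\<Sum>i\<in>S. A i j1) = (\<Sum>i\<in>S. A i j2)))"

definition sigmoid :: "real \<Rightarrow> real" where
  "sigmoid t = 1 / (1 + exp (- t))"

definition klr_obj ::
  "('n::finite \<Rightarrow> 'n \<Rightarrow> real) \<Rightarrow> ('n \<Rightarrow> real) \<Rightarrow> ('n \<Rightarrow> real) \<Rightarrow> real
     \<Rightarrow> ('n \<Rightarrow> real) \<Rightarrow> real \<Rightarrow> real" where
  "klr_obj K y v lam \<alpha> b =
     (let yhat = (\<lambda>i. sigmoid ((\<Sum>j\<in>UNIV. K i j * \<alpha> j) + b)) in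
      - (\<Sum>i\<in>UNIV. v i * (y i * ln (yhat i) + (1 - y i) * ln (1 - yhat i)))
      + lam * (\<Sum>i\<in>UNIV. \<Sum>j\<in>UNIV. \<alpha> i * K i j * \<alpha> j))"

definition reduction_coloring :: "(('v \<Rightarrow> real) \<Rightarrow> real) \<Rightarrow> 'v set set \<Rightarrow> bool" where
  "reduction_coloring F P \<longleftrightarrow> partition_on UNIV P \<and>
     (\<forall>x. (\<forall>C\<in>P. \<forall>u\<in>C. \<forall>w\<in>C. x u = x w) \<longrightarrow>
        (\<forall>C\<in>P. \<forall>u\<in>C. \<forall>w\<in>C. \<exists>D.
            ((\<lambda>t. F (x(u := t))) has_real_derivative D) (at (x u)) \<and>
            ((\<lambda>t. F (x(w := t))) has_real_derivative D) (at (x w))))"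

end

theory Submission
  imports Defs
begin

text \<open>The partial derivative of the objective with respect to \<open>\<alpha>\<^sub>j\<close> is
  \<open>(K\<^sup>T (v \<circ> (\<sigma>(K\<alpha> + b) - y)))\<^sub>j + lam ((K\<alpha>)\<^sub>j + (K\<^sup>T\<alpha>)\<^sub>j)\<close>.
  If \<open>\<alpha>\<close> is constant on the colors, the row condition of equitability makes \<open>K\<alpha>\<close>, hence the
  predictions, constant on the colors as well. Every term of the gradient except the label term
  is then a color-constant weight summed against a column of \<open>K\<close>, which the column condition
  of equitability makes constant on each color; the label term is hypothesis (2).\<close>

definition logistic_loss :: "real \<Rightarrow> real \<Rightarrow> real" where
  "logistic_loss y z = - (y * ln (sigmoid z) + (1 - y) * ln (1 - sigmoid z))"

definition klr_logit :: "('n::finite \<Rightarrow> 'n \<Rightarrow> real) \<Rightarrow> ('n \<Rightarrow> real) \<Rightarrow> real \<Rightarrow> 'n \<Rightarrow> real" where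
  "klr_logit K \<alpha> b i = (\<Sum>k\<in>UNIV. K i k * \<alpha> k) + b"

lemma klr_obj_eq:
  "klr_obj K y v lam \<alpha> b =
     (\<Sum>i\<in>UNIV. v i * logistic_loss (y i) (klr_logit K \<alpha> b i))
     + lam * (\<Sum>i\<in>UNIV. \<Sum>j\<in>UNIV. \<alpha> i * K i j * \<alpha> j)"
  by (simp add: klr_obj_def logistic_loss_def klr_logit_def algebra_simps flip: sum_negf)

lemma logistic_loss_eq: "logistic_loss y z = ln (1 + exp (- z)) + (1 - y) * z"
proof -
  have "0 < 1 + exp (- z)"
    by (simp add: add_pos_pos)
  then have ln_sigmoid: "ln (sigmoid z) = - ln (1 + exp (- z))"
    and ln_one_minus_sigmoid: "ln (1 - sigmoid z) = - z - ln (1 + exp (- z))"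
    by (simp_all add: sigmoid_def ln_div field_simps)
  show ?thesis
    unfolding logistic_loss_def ln_sigmoid ln_one_minus_sigmoid by (simp add: algebra_simps)
qed

lemma has_real_derivative_logistic_loss:
  assumes "(f has_real_derivative f') (at x)"
  shows "((\<lambda>x. logistic_loss y (f x)) has_real_derivative (sigmoid (f x) - y) * f') (at x)"
proof (rule DERIV_chain2[OF _ assms])
  have "0 < 1 + exp (- f x)"
    by (simp add: add_pos_pos)
  then show "(logistic_loss y has_real_derivative sigmoid (f x) - y) (at (f x))"
    unfolding logistic_loss_eq[abs_def]
    by (auto intro!: derivative_eq_intros simp: sigmoid_def field_simps)
qed

lemma has_real_derivative_fun_upd:
  "((\<lambda>t. (f(j := t)) k) has_real_derivative of_bool (k = j)) (at x)"
  by (cases "k = j") auto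

lemma has_real_derivative_klr_logit_alpha:
  "((\<lambda>t. klr_logit K (\<alpha>(j := t)) b i) has_real_derivative K i j) (at x)"
proof -
  have "((\<lambda>t. klr_logit K (\<alpha>(j := t)) b i) has_real_derivative
      (\<Sum>k\<in>UNIV. K i k * of_bool (k = j)) + 0) (at x)"
    unfolding klr_logit_def
    by (intro DERIV_add DERIV_sum DERIV_cmult has_real_derivative_fun_upd DERIV_const)
  then show ?thesis
    by simp
qed

lemma has_real_derivative_klr_logit_b:
  "((\<lambda>t. klr_logit K \<alpha> t i) has_real_derivative 1) (at b)"
  unfolding klr_logit_def by (auto intro!: derivative_eq_intros)

lemma has_real_derivative_quadratic_form_fun_upd:
  fixes A :: "'n::finite \<Rightarrow> 'n \<Rightarrow> real"
  shows "((\<lambda>t. \<Sum>i\<in>UNIV. \<Sum>k\<in>UNIV. (\<alpha>(j := t)) i * A i k * (\<alpha>(j := t)) k) has_real_derivative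
      (\<Sum>k\<in>UNIV. A j k * (\<alpha>(j := x)) k) + (\<Sum>i\<in>UNIV. (\<alpha>(j := x)) i * A i j)) (at x)"
proof -
  let ?a = "\<alpha>(j := x)"
  have "((\<lambda>t. \<Sum>i\<in>UNIV. \<Sum>k\<in>UNIV. ((\<alpha>(j := t)) i * A i k) * (\<alpha>(j := t)) k) has_real_derivative
      (\<Sum>i\<in>UNIV. \<Sum>k\<in>UNIV. (?a i * A i k) * of_bool (k = j) + (of_bool (i = j) * A i k) * ?a k))
      (at x)"
    by (intro DERIV_sum DERIV_mult' DERIV_cmult_right has_real_derivative_fun_upd)
  moreover have "(\<Sum>i\<in>UNIV. \<Sum>k\<in>UNIV. of_bool (i = j) * A i k * ?a k) = (\<Sum>k\<in>UNIV. A j k * ?a k)"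
    by (simp add: sum.swap[of _ UNIV UNIV] flip: sum_distrib_right)
  ultimately show ?thesis
    by (simp add: sum.distrib add.commute)
qed

definition klr_grad_alpha ::
  "('n::finite \<Rightarrow> 'n \<Rightarrow> real) \<Rightarrow> ('n \<Rightarrow> real) \<Rightarrow> ('n \<Rightarrow> real) \<Rightarrow> real
     \<Rightarrow> ('n \<Rightarrow> real) \<Rightarrow> real \<Rightarrow> 'n \<Rightarrow> real" where
  "klr_grad_alpha K y v lam \<alpha> b j =
     (\<Sum>i\<in>UNIV. v i * ((sigmoid (klr_logit K \<alpha> b i) - y i) * K i j))
     + lam * ((\<Sum>k\<in>UNIV. K j k * \<alpha> k) + (\<Sum>i\<in>UNIV. \<alpha> i * K i j))"

lemma has_real_derivative_klr_obj_alpha: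
  "((\<lambda>t. klr_obj K y v lam (\<alpha>(j := t)) b) has_real_derivative
     klr_grad_alpha K y v lam (\<alpha>(j := x)) b j) (at x)"
  unfolding klr_obj_eq klr_grad_alpha_def
  by (intro DERIV_add DERIV_sum DERIV_cmult has_real_derivative_logistic_loss
      has_real_derivative_klr_logit_alpha has_real_derivative_quadratic_form_fun_upd)

lemma has_real_derivative_klr_obj_b:
  "((\<lambda>t. klr_obj K y v lam \<alpha> t) has_real_derivative
     (\<Sum>i\<in>UNIV. v i * (sigmoid (klr_logit K \<alpha> b i) - y i))) (at b)"
proof -
  have "((\<lambda>t. klr_obj K y v lam \<alpha> t) has_real_derivative
     (\<Sum>i\<in>UNIV. v i * ((sigmoid (klr_logit K \<alpha> b i) - y i) * 1)) + 0) (at b)"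
    unfolding klr_obj_eq
    by (intro DERIV_add DERIV_sum DERIV_cmult has_real_derivative_logistic_loss
        has_real_derivative_klr_logit_b DERIV_const)
  then show ?thesis
    by simp
qed

lemma constant_on_iff: "f constant_on A \<longleftrightarrow> (\<forall>x\<in>A. \<forall>y\<in>A. f x = f y)"
  unfolding constant_on_def by (cases "A = {}") auto

lemma equitable_transpose: "equitable P Q A \<longleftrightarrow> equitable Q P (\<lambda>j i. A i j)"
  unfolding equitable_def by blast

lemma equitable_weighted_column_sum_eq:
  fixes A :: "'r::finite \<Rightarrow> 'c \<Rightarrow> real"
  assumes part: "partition_on UNIV P" and eq: "equitable P Q A"
    and g: "\<forall>S\<in>P. g constant_on S"
    and T: "T \<in> Q" "j1 \<in> T" "j2 \<in> T"
  shows "(\<Sum>i\<in>UNIV. g i * A i j1) = (\<Sum>i\<in>UNIV. g i * A i j2)"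
proof -
  have "(\<Sum>i\<in>S. g i * A i j1) = (\<Sum>i\<in>S. g i * A i j2)" if S: "S \<in> P" for S
  proof -
    obtain c where c: "\<forall>i\<in>S. g i = c"
      using g S unfolding constant_on_def by blast
    have "(\<Sum>i\<in>S. A i j1) = (\<Sum>i\<in>S. A i j2)"
      using eq S T unfolding equitable_def by blast
    then show ?thesis
      using c by (simp add: sum_distrib_left[symmetric])
  qed
  then show ?thesis
    by (simp add: sum.partition[OF finite part])
qed

lemma equitable_weighted_row_sum_eq:
  fixes A :: "'r \<Rightarrow> 'c::finite \<Rightarrow> real"
  assumes "partition_on UNIV Q" and "equitable P Q A"
    and "\<forall>T\<in>Q. g constant_on T"
    and "S \<in> P" "i1 \<in> S" "i2 \<in> S"
  shows "(\<Sum>j\<in>UNIV. A i1 j * g j) = (\<Sum>j\<in>UNIV. A i2 j * g j)"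
  using equitable_weighted_column_sum_eq[OF assms(1) equitable_transpose[THEN iffD1, OF assms(2)]
      assms(3-)]
  by (simp add: mult.commute)

lemma klr_grad_alpha_eq_on_color:
  fixes K :: "'n::finite \<Rightarrow> 'n \<Rightarrow> real"
  assumes part: "partition_on UNIV Q" and eq: "equitable Q Q K"
    and labels: "\<forall>S\<in>Q. (\<lambda>j. \<Sum>i\<in>UNIV. v i * K i j * y i) constant_on S"
    and weights: "\<forall>S\<in>Q. v constant_on S"
    and \<alpha>: "\<forall>S\<in>Q. \<alpha> constant_on S"
    and T: "T \<in> Q" "j1 \<in> T" "j2 \<in> T"
  shows "klr_grad_alpha K y v lam \<alpha> b j1 = klr_grad_alpha K y v lam \<alpha> b j2"
proof -
  let ?w = "\<lambda>i. v i * sigmoid (klr_logit K \<alpha> b i)"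
  have "?w i1 = ?w i2" if "S \<in> Q" "i1 \<in> S" "i2 \<in> S" for S i1 i2
  proof -
    have "klr_logit K \<alpha> b i1 = klr_logit K \<alpha> b i2"
      using equitable_weighted_row_sum_eq[OF part eq \<alpha> that] by (simp add: klr_logit_def)
    moreover have "v i1 = v i2"
      using weights that unfolding constant_on_iff by blast
    ultimately show ?thesis
      by simp
  qed
  then have "\<forall>S\<in>Q. ?w constant_on S"
    unfolding constant_on_iff by blast
  then have "(\<Sum>i\<in>UNIV. ?w i * K i j1) = (\<Sum>i\<in>UNIV. ?w i * K i j2)"
    by (rule equitable_weighted_column_sum_eq[OF part eq _ T])
  moreover have "(\<Sum>i\<in>UNIV. v i * K i j1 * y i) = (\<Sum>i\<in>UNIV. v i * K i j2 * y i)"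
    using labels T unfolding constant_on_iff by blast
  moreover have "(\<Sum>k\<in>UNIV. K j1 k * \<alpha> k) = (\<Sum>k\<in>UNIV. K j2 k * \<alpha> k)"
    by (rule equitable_weighted_row_sum_eq[OF part eq \<alpha> T])
  moreover have "(\<Sum>i\<in>UNIV. \<alpha> i * K i j1) = (\<Sum>i\<in>UNIV. \<alpha> i * K i j2)"
    by (rule equitable_weighted_column_sum_eq[OF part eq \<alpha> T])
  moreover have "klr_grad_alpha K y v lam \<alpha> b j =
      (\<Sum>i\<in>UNIV. ?w i * K i j) - (\<Sum>i\<in>UNIV. v i * K i j * y i)
      + lam * ((\<Sum>k\<in>UNIV. K j k * \<alpha> k) + (\<Sum>i\<in>UNIV. \<alpha> i * K i j))" for j
    by (simp add: klr_grad_alpha_def algebra_simps sum_subtractf)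
  ultimately show ?thesis
    by simp
qed

lemma partition_on_option:
  fixes Q :: "'a set set"
  assumes "partition_on UNIV Q"
  shows "partition_on UNIV ({Some ` T | T. T \<in> Q} \<union> {{None}})"
proof -
  have "(`) Some ` Q - {{}} = (`) Some ` Q"
    using partition_onD3[OF assms] by auto
  moreover have "range Some = (UNIV - {None} :: 'a option set)"
    by (auto simp: UNIV_option_conv)
  ultimately have "partition_on (UNIV - {None}) ((`) Some ` Q)"
    using partition_on_inj_image[OF assms inj_Some] by simp
  moreover have "disjnt {None} (\<Union> ((`) Some ` Q))"
    by (auto simp: disjnt_def)
  ultimately have "partition_on UNIV (insert {None} ((`) Some ` Q))"
    by (simp add: partition_on_insert)
  moreover have "{Some ` T | T. T \<in> Q} \<union> {{None}} = insert {None} ((`) Some ` Q)"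
    by blast
  ultimately show ?thesis
    by simp
qed

lemma reduction_coloring_option:
  fixes G :: "('n \<Rightarrow> real) \<Rightarrow> real \<Rightarrow> real"
  assumes part: "partition_on UNIV Q"
    and deriv_None: "\<And>\<alpha> b. \<exists>D. ((\<lambda>t. G \<alpha> t) has_real_derivative D) (at b)"
    and deriv_Some: "\<And>\<alpha> b T j1 j2. \<forall>S\<in>Q. \<alpha> constant_on S \<Longrightarrow> T \<in> Q \<Longrightarrow> j1 \<in> T \<Longrightarrow> j2 \<in> T \<Longrightarrow>
      \<exists>D. ((\<lambda>t. G (\<alpha>(j1 := t)) b) has_real_derivative D) (at (\<alpha> j1)) \<and>
          ((\<lambda>t. G (\<alpha>(j2 := t)) b) has_real_derivative D) (at (\<alpha> j2))"
  shows "reduction_coloring (\<lambda>x. G (\<lambda>i. x (Some i)) (x None)) ({Some ` T | T. T \<in> Q} \<union> {{None}})"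
  unfolding reduction_coloring_def
proof (intro conjI allI impI ballI partition_on_option[OF part])
  fix x :: "'n option \<Rightarrow> real" and C u w
  assume x: "\<forall>C\<in>{Some ` T | T. T \<in> Q} \<union> {{None}}. \<forall>u\<in>C. \<forall>w\<in>C. x u = x w"
    and C: "C \<in> {Some ` T | T. T \<in> Q} \<union> {{None}}" "u \<in> C" "w \<in> C"
  define \<alpha> where "\<alpha> i = x (Some i)" for i
  have upd_Some: "(\<lambda>i. (x(Some j := t)) (Some i)) = \<alpha>(j := t)" for j t
    by (auto simp: \<alpha>_def)
  show "\<exists>D. ((\<lambda>t. G (\<lambda>i. (x(u := t)) (Some i)) ((x(u := t)) None)) has_real_derivative D) (at (x u)) \<and>
            ((\<lambda>t. G (\<lambda>i. (x(w := t)) (Some i)) ((x(w := t)) None)) has_real_derivative D) (at (x w))"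
  proof (cases "C = {None}")
    case True
    then have "u = None" "w = None"
      using C by auto
    moreover have "(\<lambda>i. (x(None := t)) (Some i)) = \<alpha>" for t
      by (auto simp: \<alpha>_def)
    ultimately show ?thesis
      using deriv_None[of \<alpha> "x None"] by simp
  next
    case False
    then obtain T j1 j2 where T: "T \<in> Q" "j1 \<in> T" "j2 \<in> T" and uw: "u = Some j1" "w = Some j2"
      using C by auto
    have "\<forall>S\<in>Q. \<alpha> constant_on S"
      using x by (auto simp: constant_on_iff \<alpha>_def)
    moreover have "x (Some j) = \<alpha> j" and "(x(Some j := t)) None = x None" for j t
      by (simp_all add: \<alpha>_def)
    ultimately show ?thesis
      using deriv_Some[OF _ T, of \<alpha> "x None"] unfolding uw upd_Some by simp
  qed
qed

lemma klr_obj_partials_agree_on_color: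
  fixes K :: "'n::finite \<Rightarrow> 'n \<Rightarrow> real"
  assumes "partition_on UNIV Q" and "equitable Q Q K"
    and "\<forall>S\<in>Q. (\<lambda>j. \<Sum>i\<in>UNIV. v i * K i j * y i) constant_on S"
    and "\<forall>S\<in>Q. v constant_on S"
    and "\<forall>S\<in>Q. \<alpha> constant_on S"
    and "T \<in> Q" "j1 \<in> T" "j2 \<in> T"
  shows "\<exists>D. ((\<lambda>t. klr_obj K y v lam (\<alpha>(j1 := t)) b) has_real_derivative D) (at (\<alpha> j1)) \<and>
             ((\<lambda>t. klr_obj K y v lam (\<alpha>(j2 := t)) b) has_real_derivative D) (at (\<alpha> j2))"
proof -
  have deriv: "((\<lambda>t. klr_obj K y v lam (\<alpha>(j := t)) b) has_real_derivative
      klr_grad_alpha K y v lam \<alpha> b j) (at (\<alpha> j))" for j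
    using has_real_derivative_klr_obj_alpha[of K y v lam \<alpha> j b "\<alpha> j"] by simp
  have "klr_grad_alpha K y v lam \<alpha> b j1 = klr_grad_alpha K y v lam \<alpha> b j2"
    by (rule klr_grad_alpha_eq_on_color[OF assms])
  with deriv[of j1] deriv[of j2] show ?thesis
    by (intro exI[of _ "klr_grad_alpha K y v lam \<alpha> b j2"] conjI) simp_all
qed

theorem theorem7:
  fixes K :: "'n::finite \<Rightarrow> 'n \<Rightarrow> real"
    and y v :: "'n \<Rightarrow> real"
    and lam :: real
    and Q :: "'n set set"
  assumes K_sym: "\<And>i j. K i j = K j i"
    and K_psd: "\<And>x. (\<Sum>i\<in>UNIV. \<Sum>j\<in>UNIV. x i * K i j * x j) \<ge> 0"
    and y01: "\<And>i. y i \<in> {0, 1}"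
    and lam: "lam \<ge> 0"
    and Q_part: "partition_on UNIV Q"
    and eq: "equitable Q Q K"
    and c2: "\<And>T j1 j2. T \<in> Q \<Longrightarrow> j1 \<in> T \<Longrightarrow> j2 \<in> T \<Longrightarrow>
               (\<Sum>i\<in>UNIV. v i * K i j1 * y i) = (\<Sum>i\<in>UNIV. v i * K i j2 * y i)"
    and c3: "\<And>T i1 i2. T \<in> Q \<Longrightarrow> i1 \<in> T \<Longrightarrow> i2 \<in> T \<Longrightarrow> v i1 = v i2"
  shows "(\<forall>b \<alpha>. (\<forall>T\<in>Q. \<forall>j1\<in>T. \<forall>j2\<in>T. \<alpha> j1 = \<alpha> j2) \<longrightarrow>
            (\<forall>T\<in>Q. \<forall>j1\<in>T. \<forall>j2\<in>T. \<exists>D.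
               ((\<lambda>t. klr_obj K y v lam (\<alpha>(j1 := t)) b) has_real_derivative D) (at (\<alpha> j1)) \<and>
               ((\<lambda>t. klr_obj K y v lam (\<alpha>(j2 := t)) b) has_real_derivative D) (at (\<alpha> j2))))
         \<and> reduction_coloring (\<lambda>x. klr_obj K y v lam (\<lambda>i. x (Some i)) (x None))
             ({Some ` T | T. T \<in> Q} \<union> {{None}})"
proof -
  have "\<forall>S\<in>Q. (\<lambda>j. \<Sum>i\<in>UNIV. v i * K i j * y i) constant_on S" "\<forall>S\<in>Q. v constant_on S"
    using c2 c3 unfolding constant_on_iff by blast+
  note partials_agree = klr_obj_partials_agree_on_color[OF Q_part eq this]
  have differentiable_b: "\<exists>D. ((\<lambda>t. klr_obj K y v lam \<alpha> t) has_real_derivative D) (at b)" for \<alpha> b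
    by (rule exI, rule has_real_derivative_klr_obj_b)
  have "\<forall>b \<alpha>. (\<forall>T\<in>Q. \<forall>j1\<in>T. \<forall>j2\<in>T. \<alpha> j1 = \<alpha> j2) \<longrightarrow>
      (\<forall>T\<in>Q. \<forall>j1\<in>T. \<forall>j2\<in>T. \<exists>D.
         ((\<lambda>t. klr_obj K y v lam (\<alpha>(j1 := t)) b) has_real_derivative D) (at (\<alpha> j1)) \<and>
         ((\<lambda>t. klr_obj K y v lam (\<alpha>(j2 := t)) b) has_real_derivative D) (at (\<alpha> j2)))"
  proof (intro allI impI ballI)
    fix b :: real and \<alpha> :: "'n \<Rightarrow> real" and T j1 j2
    assume "\<forall>T\<in>Q. \<forall>j1\<in>T. \<forall>j2\<in>T. \<alpha> j1 = \<alpha> j2"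
    then have "\<forall>S\<in>Q. \<alpha> constant_on S"
      unfolding constant_on_iff .
    then show "T \<in> Q \<Longrightarrow> j1 \<in> T \<Longrightarrow> j2 \<in> T \<Longrightarrow> \<exists>D.
        ((\<lambda>t. klr_obj K y v lam (\<alpha>(j1 := t)) b) has_real_derivative D) (at (\<alpha> j1)) \<and>
        ((\<lambda>t. klr_obj K y v lam (\<alpha>(j2 := t)) b) has_real_derivative D) (at (\<alpha> j2))"
      by (rule partials_agree)
  qed
  moreover have "reduction_coloring (\<lambda>x. klr_obj K y v lam (\<lambda>i. x (Some i)) (x None))
      ({Some ` T | T. T \<in> Q} \<union> {{None}})"
    by (rule reduction_coloring_option[OF Q_part differentiable_b partials_agree])
  ultimately show ?thesis
    by (rule conjI)
qed

end
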